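(* Let $k$ be a positive integer and let $G$ be a finite graph whose vertex set is partitioned into cliques $V_1,\ldots,V_r$. Suppose that for every $i \in \{1,\ldots,r\}$ and every $v \in V_i$, the number of neighbours of $v$ outside $V_i$ is at most $\min\{k, |V_i|-k\}$. Then $G$ contains a stable set of size $r$.
   Context: A stable set is a set of pairwise non-adjacent vertices. *)

theory Defs
  imports Main
begin

definition simple_graph :: "'a set \<Rightarrow> ('a \<Rightarrow> 'a \<Rightarrow> bool) \<Rightarrow> bool" where
  "simple_graph V E \<longleftrightarrow> finite V \<and> (\<forall>u v. E u v \<longrightarrow> E v u)
     \<and> (\<forall>v. \<not> E v v) \<and> (\<forall>u v. E u v \<longrightarrow> u \<in> V \<and> v \<in> V)"

definition is_clique :: "('a \<Rightarrow> 'a \<Rightarrow> bool) \<Rightarrow> 'a set \<Rightarrow> bool" where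
  "is_clique E C \<longleftrightarrow> (\<forall>u\<in>C. \<forall>v\<in>C. u \<noteq> v \<longrightarrow> E u v)"

definition stable_set :: "('a \<Rightarrow> 'a \<Rightarrow> bool) \<Rightarrow> 'a set \<Rightarrow> bool" where
  "stable_set E S \<longleftrightarrow> (\<forall>u\<in>S. \<forall>v\<in>S. \<not> E u v)"

definition nbrs_outside :: "'a set \<Rightarrow> ('a \<Rightarrow> 'a \<Rightarrow> bool) \<Rightarrow> 'a \<Rightarrow> 'a set \<Rightarrow> 'a set" where
  "nbrs_outside V E v A = {u \<in> V - A. E v u}"

end

theory Submission imports Defs begin

text \<open>We pick one vertex from each part, so only edges between different parts matter; the argument is Haxell's alternating tree.
Suppose a stable choice \<open>m\<close> on a set \<open>I\<close> of parts cannot be extended to a further root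
part. Grow pairs \<open>(y\<^sub>1, a\<^sub>1), \<dots>, (y\<^sub>t, a\<^sub>t)\<close> where \<open>y\<^sub>i\<close> lies in the root part or in one of
\<open>a\<^sub>1, \<dots>, a\<^sub>i\<^sub>-\<^sub>1\<close>, has no cross edge to the earlier \<open>y\<^sub>j\<close> and \<open>m a\<^sub>j\<close>, but is
cross-adjacent to \<open>m a\<^sub>i\<close>. The parts of this tree contain \<open>|V\<^sub>r\<^sub>t| + \<Sum> |V\<^sub>a\<^sub>i|\<close> vertices,
whereas at most \<open>\<Sum> (k + (|V\<^sub>a\<^sub>i| - k))\<close> vertices have a cross edge to some \<open>y\<^sub>i\<close> or
\<open>m a\<^sub>i\<close>, so some tree vertex \<open>z\<close> is free. If \<open>z\<close> sees a chosen vertex the tree grows;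
otherwise \<open>z\<close> extends \<open>m\<close> (impossible) or replaces \<open>m a\<^sub>j\<close>, which lowers the number of
chosen neighbours of \<open>y\<^sub>j\<close>. These numbers cannot decrease lexicographically forever.\<close>

lemma lex_less_thanI:
  "length xs = length ys \<Longrightarrow> p < length xs \<Longrightarrow> (\<forall>i<p. xs!i \<le> ys!i) \<Longrightarrow> xs!p < (ys!p :: nat)
   \<Longrightarrow> (xs, ys) \<in> lex less_than"
proof (induction xs arbitrary: ys p)
  case Nil
  then show ?case by simp
next
  case (Cons x xs)
  then obtain y ys' where ys: "ys = y # ys'" by (cases ys) auto
  show ?case
  proof (cases p)
    case 0
    then show ?thesis using Cons.prems ys by simp
  next
    case (Suc p')
    have "x \<le> y" using Cons.prems ys Suc by force
    moreover have "x = y \<Longrightarrow> (xs, ys') \<in> lex less_than"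
      using Cons.prems ys Suc by (intro Cons.IH[of ys' p']) (auto simp: less_Suc_eq_0_disj)
    ultimately show ?thesis using ys Cons.prems(1) by (cases "x = y") auto
  qed
qed

locale cross_bounded_partition =
  fixes V :: "'a set" and E :: "'a \<Rightarrow> 'a \<Rightarrow> bool"
    and P :: "nat \<Rightarrow> 'a set" and k r :: nat
  assumes graph: "simple_graph V E"
    and parts_subset: "\<And>i. i < r \<Longrightarrow> P i \<subseteq> V"
    and parts_nonempty: "\<And>i. i < r \<Longrightarrow> P i \<noteq> {}"
    and parts_disjoint: "\<And>i j. i < r \<Longrightarrow> j < r \<Longrightarrow> i \<noteq> j \<Longrightarrow> P i \<inter> P j = {}"
    and degree: "\<And>i v. i < r \<Longrightarrow> v \<in> P i \<Longrightarrow>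
      card (nbrs_outside V E v (P i)) \<le> k \<and> card (nbrs_outside V E v (P i)) + k \<le> card (P i)"
begin

definition cross_adj :: "'a \<Rightarrow> 'a \<Rightarrow> bool" where
  "cross_adj u v \<longleftrightarrow> E u v \<and> \<not> (\<exists>j<r. u \<in> P j \<and> v \<in> P j)"

definition cross_nbrs :: "'a \<Rightarrow> 'a set" where
  "cross_nbrs v = {u. cross_adj v u}"

definition stable_choice :: "nat set \<Rightarrow> (nat \<Rightarrow> 'a) \<Rightarrow> bool" where
  "stable_choice I m \<longleftrightarrow> (\<forall>i\<in>I. m i \<in> P i) \<and> (\<forall>i\<in>I. \<forall>j\<in>I. \<not> E (m i) (m j))"

lemma finite_V: "finite V"
  using graph by (simp add: simple_graph_def)

lemma E_sym: "E u v \<Longrightarrow> E v u"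
  using graph by (simp add: simple_graph_def)

lemma E_irrefl: "\<not> E v v"
  using graph by (simp add: simple_graph_def)

lemma E_in_V: "E u v \<Longrightarrow> v \<in> V"
  using graph by (simp add: simple_graph_def)

lemma finite_part: "i < r \<Longrightarrow> finite (P i)"
  using parts_subset finite_V finite_subset by blast

lemma part_unique: "i < r \<Longrightarrow> j < r \<Longrightarrow> v \<in> P i \<Longrightarrow> v \<in> P j \<Longrightarrow> i = j"
  using parts_disjoint by blast

lemma cross_adj_sym: "cross_adj u v \<longleftrightarrow> cross_adj v u"
  unfolding cross_adj_def using E_sym by blast

lemma cross_adjI:
  "u \<in> P i \<Longrightarrow> v \<in> P j \<Longrightarrow> i < r \<Longrightarrow> j < r \<Longrightarrow> i \<noteq> j \<Longrightarrow> E u v \<Longrightarrow> cross_adj u v"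
  unfolding cross_adj_def using part_unique by blast

lemma cross_nbrs_eq: "i < r \<Longrightarrow> v \<in> P i \<Longrightarrow> cross_nbrs v = nbrs_outside V E v (P i)"
  unfolding cross_nbrs_def nbrs_outside_def cross_adj_def using E_in_V part_unique by blast

lemma finite_cross_nbrs: "finite (cross_nbrs v)"
proof -
  have "cross_nbrs v \<subseteq> V"
    unfolding cross_nbrs_def cross_adj_def using E_in_V by blast
  then show ?thesis using finite_V finite_subset by blast
qed

lemma card_cross_nbrs:
  "i < r \<Longrightarrow> v \<in> P i \<Longrightarrow> card (cross_nbrs v) \<le> k \<and> card (cross_nbrs v) + k \<le> card (P i)"
  using degree cross_nbrs_eq by simp

lemma stable_choice_update:
  assumes m: "stable_choice I m" and I: "I \<subseteq> {..<r}" and q: "q < r" "z \<in> P q"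
    and no_nbr: "\<forall>b\<in>I - {q}. \<not> cross_adj z (m b)"
  shows "stable_choice (insert q I) (m(q := z))"
proof -
  have mP: "\<forall>i\<in>I. m i \<in> P i" and mE: "\<forall>i\<in>I. \<forall>j\<in>I. \<not> E (m i) (m j)"
    using m unfolding stable_choice_def by auto
  have "\<not> E z (m j)" if "j \<in> I - {q}" for j
    using that no_nbr cross_adjI[OF q(2) mP[rule_format, of j] q(1)] I by auto
  then show ?thesis
    unfolding stable_choice_def using mP mE q(2) E_irrefl E_sym by (auto, metis+)
qed

lemma stable_choice_stable_set:
  assumes "stable_choice {..<r} m"
  shows "m ` {..<r} \<subseteq> V \<and> stable_set E (m ` {..<r}) \<and> card (m ` {..<r}) = r"
proof -
  have mP: "\<forall>i<r. m i \<in> P i" and mE: "\<forall>i<r. \<forall>j<r. \<not> E (m i) (m j)"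
    using assms unfolding stable_choice_def by auto
  have "inj_on m {..<r}"
    unfolding inj_on_def by (metis lessThan_iff mP part_unique)
  moreover have "m ` {..<r} \<subseteq> V"
    using mP parts_subset by blast
  ultimately show ?thesis
    using mE by (auto simp: stable_set_def card_image)
qed

end

locale stuck_choice = cross_bounded_partition +
  fixes I :: "nat set" and rt :: nat
  assumes I_subset: "I \<subseteq> {..<r}" and root_less: "rt < r" and root_notin: "rt \<notin> I"
    and not_extendable: "\<nexists>m. stable_choice (insert rt I) m"
begin

text \<open>The pair \<open>ps ! i\<close> is \<open>(y\<^sub>i, a\<^sub>i)\<close>; \<open>tree_parts ps i\<close> are the parts available to \<open>y\<^sub>i\<close>.\<close>

definition tree_parts :: "('a \<times> nat) list \<Rightarrow> nat \<Rightarrow> nat set" where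
  "tree_parts ps i = insert rt ((\<lambda>j. snd (ps!j)) ` {..<i})"

definition alt_seq :: "(nat \<Rightarrow> 'a) \<Rightarrow> ('a \<times> nat) list \<Rightarrow> bool" where
  "alt_seq m ps \<longleftrightarrow> stable_choice I m \<and> (\<forall>i<length ps. snd (ps!i) \<in> I
    \<and> (\<exists>q \<in> tree_parts ps i. fst (ps!i) \<in> P q)
    \<and> cross_adj (fst (ps!i)) (m (snd (ps!i)))
    \<and> (\<forall>j<i. \<not> cross_adj (fst (ps!i)) (fst (ps!j)) \<and> \<not> cross_adj (fst (ps!i)) (m (snd (ps!j)))))"

definition free :: "(nat \<Rightarrow> 'a) \<Rightarrow> ('a \<times> nat) list \<Rightarrow> 'a \<Rightarrow> bool" where
  "free m ps z \<longleftrightarrow> (\<forall>i<length ps. \<not> cross_adj z (fst (ps!i)) \<and> \<not> cross_adj z (m (snd (ps!i))))"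

definition dom_count :: "(nat \<Rightarrow> 'a) \<Rightarrow> ('a \<times> nat) list \<Rightarrow> nat \<Rightarrow> nat" where
  "dom_count m ps i = card {b\<in>I. cross_adj (fst (ps!i)) (m b)}"

text \<open>The padding \<open>Suc r\<close> exceeds every \<open>dom_count\<close>, so growing the sequence lowers the
signature.\<close>

definition signature :: "(nat \<Rightarrow> 'a) \<Rightarrow> ('a \<times> nat) list \<Rightarrow> nat list" where
  "signature m ps = map (\<lambda>i. if i < length ps then dom_count m ps i else Suc r) [0..<r]"

definition improves :: "(nat \<Rightarrow> 'a) \<Rightarrow> ('a \<times> nat) list \<Rightarrow> (nat \<Rightarrow> 'a) \<Rightarrow> ('a \<times> nat) list \<Rightarrow> bool"
  where "improves m' ps' m ps \<longleftrightarrow> (\<exists>p<length ps. p < length ps'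
    \<and> (\<forall>i<p. dom_count m' ps' i \<le> dom_count m ps i) \<and> dom_count m' ps' p < dom_count m ps p)"

lemma finite_I: "finite I"
  using I_subset finite_subset by blast

lemma card_I_less: "card I < r"
proof -
  have "I \<subseteq> {..<r} - {rt}" using I_subset root_notin by auto
  then have "card I \<le> card ({..<r} - {rt})" by (simp add: card_mono)
  then show ?thesis using root_less by simp
qed

lemma dom_count_le: "dom_count m ps i \<le> card I"
  unfolding dom_count_def by (rule card_mono[OF finite_I]) auto

lemma alt_seq_in_I: "alt_seq m ps \<Longrightarrow> i < length ps \<Longrightarrow> snd (ps!i) \<in> I"
  unfolding alt_seq_def by blast

lemma alt_seq_distinct:
  "alt_seq m ps \<Longrightarrow> j < i \<Longrightarrow> i < length ps \<Longrightarrow> snd (ps!j) \<noteq> snd (ps!i)"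
  unfolding alt_seq_def by metis

lemma alt_seq_length: "alt_seq m ps \<Longrightarrow> length ps \<le> card I"
proof -
  assume v: "alt_seq m ps"
  have "inj_on (\<lambda>i. snd (ps!i)) {..<length ps}"
    unfolding inj_on_def using alt_seq_distinct[OF v] by (metis lessThan_iff linorder_neqE_nat)
  moreover have "(\<lambda>i. snd (ps!i)) ` {..<length ps} \<subseteq> I"
    using alt_seq_in_I[OF v] by auto
  ultimately show ?thesis using card_inj_on_le[OF _ _ finite_I] by fastforce
qed

lemma tree_parts_less:
  assumes "alt_seq m ps" "i \<le> length ps" "q \<in> tree_parts ps i"
  shows "q < r"
proof -
  have "snd (ps!j) < r" if "j < i" for j
    using alt_seq_in_I[OF assms(1) less_le_trans[OF that assms(2)]] I_subset by auto
  then show ?thesis using assms(3) root_less unfolding tree_parts_def by auto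
qed

lemma tree_parts_take: "i \<le> j \<Longrightarrow> tree_parts (take j ps) i = tree_parts ps i"
  unfolding tree_parts_def by auto

lemma alt_seq_snoc:
  assumes v: "alt_seq m ps" and b: "b \<in> I" and y: "y \<in> P q" "q \<in> tree_parts ps (length ps)"
    and adj: "cross_adj y (m b)" and fr: "free m ps y"
  shows "alt_seq m (ps @ [(y, b)])"
proof -
  have "tree_parts (ps @ [(y, b)]) i = tree_parts ps i" if "i \<le> length ps" for i
    using that unfolding tree_parts_def by (auto simp: nth_append)
  then show ?thesis
    using v b y adj fr unfolding alt_seq_def free_def by (auto simp: nth_append less_Suc_eq)
qed

lemma alt_seq_take: "alt_seq m ps \<Longrightarrow> alt_seq m (take j ps)"
  unfolding alt_seq_def by (simp add: tree_parts_take)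

lemma alt_seq_update:
  "alt_seq m ps \<Longrightarrow> stable_choice I (m(b := w)) \<Longrightarrow> \<forall>i<length ps. snd (ps!i) \<noteq> b
   \<Longrightarrow> alt_seq (m(b := w)) ps"
  unfolding alt_seq_def by auto

lemma signature_snoc_lex:
  assumes "alt_seq m (ps @ [x])"
  shows "(signature m (ps @ [x]), signature m ps) \<in> lex less_than"
proof -
  have len: "length ps < r"
    using alt_seq_length[OF assms] card_I_less by simp
  show ?thesis
    using len dom_count_le[of m "ps @ [x]" "length ps"] card_I_less
    by (intro lex_less_thanI[of _ _ "length ps"]) (auto simp: signature_def nth_append dom_count_def)
qed

lemma signature_lex:
  assumes "alt_seq m ps" "improves m' ps' m ps"
  shows "(signature m' ps', signature m ps) \<in> lex less_than"
proof -
  obtain p where p: "p < length ps" "p < length ps'"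
      "\<forall>i<p. dom_count m' ps' i \<le> dom_count m ps i" "dom_count m' ps' p < dom_count m ps p"
    using assms(2) unfolding improves_def by blast
  have "p < r" using p(1) alt_seq_length[OF assms(1)] card_I_less by simp
  then show ?thesis
    using p by (intro lex_less_thanI[of _ _ p]) (auto simp: signature_def)
qed

lemma improves_prefix:
  assumes "improves m'' ps'' m' ps'" "length ps' \<le> length ps"
    and "\<forall>i<length ps'. dom_count m' ps' i \<le> dom_count m ps i"
  shows "improves m'' ps'' m ps"
  using assms unfolding improves_def by (meson le_trans less_le_trans order.strict_trans)

lemma card_tree_vertices:
  assumes v: "alt_seq m ps"
  shows "card (\<Union>q\<in>tree_parts ps (length ps). P q)
    = card (P rt) + (\<Sum>i<length ps. card (P (snd (ps!i))))"
proof -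
  let ?a = "\<lambda>i. snd (ps!i)"
  have inj: "inj_on ?a {..<length ps}"
    unfolding inj_on_def using alt_seq_distinct[OF v] by (metis lessThan_iff linorder_neqE_nat)
  have "rt \<notin> ?a ` {..<length ps}"
    using alt_seq_in_I[OF v] root_notin by auto
  moreover have "\<forall>q\<in>tree_parts ps (length ps). q < r"
    using tree_parts_less[OF v] by blast
  then have "card (\<Union>q\<in>tree_parts ps (length ps). P q) = (\<Sum>q\<in>tree_parts ps (length ps). card (P q))"
    using finite_part parts_disjoint
    by (intro card_UN_disjoint) (auto simp: tree_parts_def)
  ultimately show ?thesis
    by (simp add: tree_parts_def sum.reindex[OF inj])
qed

lemma card_dominated_le:
  assumes v: "alt_seq m ps"
  shows "card (\<Union>i<length ps. cross_nbrs (fst (ps!i)) \<union> cross_nbrs (m (snd (ps!i))))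
    \<le> (\<Sum>i<length ps. card (P (snd (ps!i))))"
proof -
  have "card (cross_nbrs (fst (ps!i))) + card (cross_nbrs (m (snd (ps!i)))) \<le> card (P (snd (ps!i)))"
    if i: "i < length ps" for i
  proof -
    obtain q where "q \<in> tree_parts ps i" "fst (ps!i) \<in> P q"
      using v i unfolding alt_seq_def by blast
    moreover have "q < r" using tree_parts_less[OF v less_imp_le[OF i] calculation(1)] .
    ultimately have "card (cross_nbrs (fst (ps!i))) \<le> k"
      using card_cross_nbrs by blast
    moreover have "snd (ps!i) < r" "m (snd (ps!i)) \<in> P (snd (ps!i))"
      using v i alt_seq_in_I[OF v i] I_subset unfolding alt_seq_def stable_choice_def by auto
    ultimately show ?thesis using card_cross_nbrs by fastforce
  qed
  then have "(\<Sum>i<length ps. card (cross_nbrs (fst (ps!i)) \<union> cross_nbrs (m (snd (ps!i)))))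
      \<le> (\<Sum>i<length ps. card (P (snd (ps!i))))"
    by (intro sum_mono) (meson card_Un_le le_trans lessThan_iff)
  then show ?thesis
    using card_UN_le[of "{..<length ps}"] le_trans by blast
qed

lemma exists_free_vertex:
  assumes v: "alt_seq m ps"
  obtains q z where "q \<in> tree_parts ps (length ps)" "z \<in> P q" "free m ps z"
proof -
  let ?T = "\<Union>q\<in>tree_parts ps (length ps). P q"
  let ?D = "\<Union>i<length ps. cross_nbrs (fst (ps!i)) \<union> cross_nbrs (m (snd (ps!i)))"
  have "card (P rt) > 0"
    using parts_nonempty finite_part root_less by (simp add: card_gt_0_iff)
  then have "card ?D < card ?T"
    using card_tree_vertices[OF v] card_dominated_le[OF v] by simp
  moreover have "finite ?D" using finite_cross_nbrs by simp
  ultimately have "\<not> ?T \<subseteq> ?D" using card_mono leD by blast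
  then obtain q z where "q \<in> tree_parts ps (length ps)" "z \<in> P q" "z \<notin> ?D" by blast
  moreover from \<open>z \<notin> ?D\<close> have "free m ps z"
    unfolding free_def cross_nbrs_def using cross_adj_sym by blast
  ultimately show ?thesis using that by blast
qed

lemma alt_seq_reroute:
  assumes v: "alt_seq m ps" and j: "j < length ps" and z: "z \<in> P (snd (ps!j))"
    and no_nbr: "\<forall>b\<in>I. \<not> cross_adj z (m b)" and fr: "free m ps z"
  defines "m' \<equiv> m(snd (ps!j) := z)"
  shows "alt_seq m' (take j ps)"
    and "\<forall>i<j. dom_count m' (take j ps) i \<le> dom_count m ps i"
    and "card {b\<in>I. cross_adj (fst (ps!j)) (m' b)} < dom_count m ps j"
    and "free m' (take j ps) (fst (ps!j))"
proof -
  let ?a = "snd (ps!j)" and ?y = "fst (ps!j)"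
  have aI: "?a \<in> I" using alt_seq_in_I[OF v j] .
  have distinct: "\<forall>i<j. snd (ps!i) \<noteq> ?a" using alt_seq_distinct[OF v _ j] by blast
  have "?a < r" using aI I_subset by auto
  then have "stable_choice (insert ?a I) m'"
    using stable_choice_update[OF _ I_subset _ z] v no_nbr unfolding m'_def alt_seq_def by blast
  then have "stable_choice I m'" using aI by (simp add: insert_absorb)
  then show "alt_seq m' (take j ps)"
    unfolding m'_def using alt_seq_update[OF alt_seq_take[OF v]] distinct j by auto
  show "\<forall>i<j. dom_count m' (take j ps) i \<le> dom_count m ps i"
  proof (intro allI impI)
    fix i assume i: "i < j"
    have "{b\<in>I. cross_adj (fst (ps!i)) (m' b)} \<subseteq> {b\<in>I. cross_adj (fst (ps!i)) (m b)}"
      using fr i j cross_adj_sym unfolding m'_def free_def by auto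
    then show "dom_count m' (take j ps) i \<le> dom_count m ps i"
      unfolding dom_count_def using i by (simp add: card_mono[OF finite_subset[OF _ finite_I]])
  qed
  have removed: "{b\<in>I. cross_adj ?y (m' b)} = {b\<in>I. cross_adj ?y (m b)} - {?a}"
    using fr j cross_adj_sym unfolding m'_def free_def by auto
  have "cross_adj ?y (m ?a)" using v j unfolding alt_seq_def by blast
  then show "card {b\<in>I. cross_adj ?y (m' b)} < dom_count m ps j"
    unfolding dom_count_def removed using aI by (intro card_Diff1_less) (simp_all add: finite_I)
  show "free m' (take j ps) ?y"
    using v j distinct unfolding free_def alt_seq_def m'_def by auto
qed

lemma exists_improvement:
  "alt_seq m ps \<Longrightarrow> z \<in> P q \<Longrightarrow> q \<in> tree_parts ps (length ps)
   \<Longrightarrow> \<forall>b\<in>I. \<not> cross_adj z (m b) \<Longrightarrow> free m ps z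
   \<Longrightarrow> \<exists>m' ps'. alt_seq m' ps' \<and> improves m' ps' m ps"
proof (induction "length ps" arbitrary: m ps z q rule: less_induct)
  case less
  note v = less.prems(1)
  show ?case
  proof (cases "q = rt")
    case True
    then have "stable_choice (insert rt I) (m(rt := z))"
      using stable_choice_update[of I m rt z] less.prems I_subset root_less
      unfolding alt_seq_def by blast
    then show ?thesis using not_extendable by blast
  next
    case False
    then obtain j where j: "j < length ps" and q: "q = snd (ps!j)"
      using less.prems(3) unfolding tree_parts_def by auto
    let ?y = "fst (ps!j)" and ?m' = "m(snd (ps!j) := z)"
    note reroute = alt_seq_reroute[OF v j less.prems(2)[unfolded q] less.prems(4,5)]
    obtain q' where "q' \<in> tree_parts ps j" and q'_y: "?y \<in> P q'"
      using v j unfolding alt_seq_def by blast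
    then have q': "q' \<in> tree_parts (take j ps) (length (take j ps))" "?y \<in> P q'"
      using j by (simp_all add: tree_parts_take min_absorb2)
    show ?thesis
    proof (cases "\<exists>b\<in>I. cross_adj ?y (?m' b)")
      case True
      then obtain b where b: "b \<in> I" "cross_adj ?y (?m' b)" by blast
      let ?ps' = "take j ps @ [(?y, b)]"
      have "alt_seq ?m' ?ps'"
        using alt_seq_snoc[OF reroute(1) b(1) q'(2) q'(1) b(2) reroute(4)] .
      moreover have "improves ?m' ?ps' m ps"
        using reroute(2,3) j
        unfolding improves_def by (intro exI[of _ j]) (auto simp: dom_count_def nth_append)
      ultimately show ?thesis by blast
    next
      case False
      then obtain m'' ps'' where "alt_seq m'' ps''" "improves m'' ps'' ?m' (take j ps)"
        using less.hyps[of "take j ps" ?m' ?y q'] j reroute(1,4) q' by auto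
      moreover have "improves m'' ps'' m ps"
        using improves_prefix[OF calculation(2)] reroute(2) j by simp
      ultimately show ?thesis by blast
    qed
  qed
qed

lemma no_alt_seq: "\<not> alt_seq m ps"
proof -
  have "\<forall>m ps. signature m ps = s \<longrightarrow> \<not> alt_seq m ps" for s
  proof (induction s rule: wf_induct_rule[OF wf_lex[OF wf_less_than]])
    case (1 s)
    show ?case
    proof (intro allI impI notI)
      fix m ps assume s: "signature m ps = s" and v: "alt_seq m ps"
      obtain q z where q: "q \<in> tree_parts ps (length ps)" "z \<in> P q" and fr: "free m ps z"
        using exists_free_vertex[OF v] .
      show False
      proof (cases "\<exists>b\<in>I. cross_adj z (m b)")
        case True
        then obtain b where b: "b \<in> I" "cross_adj z (m b)" by blast
        have "alt_seq m (ps @ [(z, b)])" using alt_seq_snoc[OF v b(1) q(2) q(1) b(2) fr] .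
        then show False using 1 s signature_snoc_lex by blast
      next
        case False
        then obtain m' ps' where "alt_seq m' ps'" "improves m' ps' m ps"
          using exists_improvement[OF v q(2) q(1) _ fr] by blast
        then show False using 1 s signature_lex[OF v] by blast
      qed
    qed
  qed
  then show ?thesis by blast
qed

lemma stable_choice_impossible: "\<not> stable_choice I m"
  using no_alt_seq[of m "[]"] by (simp add: alt_seq_def)

end

lemma (in cross_bounded_partition) stable_choice_exists:
  "finite I \<Longrightarrow> I \<subseteq> {..<r} \<Longrightarrow> \<exists>m. stable_choice I m"
proof (induction I rule: finite_induct)
  case empty
  then show ?case by (simp add: stable_choice_def)
next
  case (insert i I)
  then obtain m where "stable_choice I m" by auto
  moreover have "stuck_choice V E P k r I i" if "\<nexists>m. stable_choice (insert i I) m"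
    using that insert by unfold_locales auto
  ultimately show ?case using stuck_choice.stable_choice_impossible by blast
qed

theorem theorem4:
  fixes V :: "'a set" and E :: "'a \<Rightarrow> 'a \<Rightarrow> bool"
    and P :: "nat \<Rightarrow> 'a set" and k r :: nat
  assumes graph: "simple_graph V E"
    and kpos: "k > 0"
    and parts_nonempty: "\<forall>i<r. P i \<noteq> {}"
    and parts_disjoint: "\<forall>i<r. \<forall>j<r. i \<noteq> j \<longrightarrow> P i \<inter> P j = {}"
    and parts_cover: "(\<Union>i<r. P i) = V"
    and parts_cliques: "\<forall>i<r. is_clique E (P i)"
    and degree: "\<forall>i<r. \<forall>v\<in>P i.
        int (card (nbrs_outside V E v (P i))) \<le> min (int k) (int (card (P i)) - int k)"
  shows "\<exists>S. S \<subseteq> V \<and> stable_set E S \<and> card S = r"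
proof -
  interpret cross_bounded_partition V E P k r
  proof
    show "\<And>i. i < r \<Longrightarrow> P i \<subseteq> V" using parts_cover by auto
  qed (use graph parts_nonempty parts_disjoint degree in force)+
  obtain m where "stable_choice {..<r} m"
    using stable_choice_exists by blast
  then show ?thesis
    using stable_choice_stable_set by blast
qed

end
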